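(* Let $K\ge 2$, let $\boldsymbol\alpha=(\alpha_1,\dots,\alpha_K)$ with all $\alpha_i>0$, and let $\boldsymbol\theta=(\theta_1,\dots,\theta_K)\sim\mathrm{Dir}(\boldsymbol\alpha)$. For a ranking $\pi$ (a bijection $\{1,\dots,K\}\to\{1,\dots,K\}$) define $$\tau(\pi,\pi^* )=\frac{2}{K(K-1)}\sum_{i\neq j}\mathbf 1_{\{\pi(i)>\pi(j)\}}\mathbf 1_{\{\theta_i>\theta_j\}} .$$ Let $$\Pi_{\boldsymbol\alpha}=\{\pi:\ \pi \text{ is a ranking of }\{1,\dots,K\}\text{ such that, for all } i,j,\ \pi(i)>\pi(j)\text{ only if }\alpha_i\ge\alpha_j\}.$$ Then $$\Pi_{\boldsymbol\alpha}=\mathop{\arg\max}_{\pi}\ \mathbb E\big[\tau(\pi,\pi^* )\,\big|\,\boldsymbol\theta\sim\mathrm{Dir}(\boldsymbol\alpha)\big],$$ where the maximum is over all rankings $\pi$ of $\{1,\dots,K\}$; in particular every ranking obtained by sorting the components of $\boldsymbol\alpha$ in decreasing order (ties broken arbitrarily) maximizes the expected value of $\tau$, and all such rankings achieve the same expected value.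
   Context: $\mathrm{Dir}(\boldsymbol\alpha)$ is the Dirichlet distribution on the open simplex $\{\boldsymbol\theta\in\mathbb R^K:\sum_i\theta_i=1,\theta_i>0\}$ with density $\frac{1}{\mathrm B(\boldsymbol\alpha)}\prod_i\theta_i^{\alpha_i-1}$. The "true ranking" $\pi^*$ is determined by $\boldsymbol\theta$ via $\pi^*(i)>\pi^*(j)$ iff $\theta_i>\theta_j$ (a higher rank value means more preferred); $\tau(\pi,\pi^* )$ is the normalized Kendall's tau agreement between $\pi$ and $\pi^*$, and the expectation is over $\boldsymbol\theta$. *)

theory Defs
  imports "HOL-Probability.Probability"
begin

text \<open>Indices are 0-based: the items are 0, ..., K-1.
  A point of the simplex is a vector theta :: nat => real (relevant on indices < K).\<close>

definition dir_beta :: "nat \<Rightarrow> (nat \<Rightarrow> real) \<Rightarrow> real" where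
  "dir_beta K \<alpha> = (\<Prod>i<K. Gamma (\<alpha> i)) / Gamma (\<Sum>i<K. \<alpha> i)"

definition dir_density :: "nat \<Rightarrow> (nat \<Rightarrow> real) \<Rightarrow> (nat \<Rightarrow> real) \<Rightarrow> real" where
  "dir_density K \<alpha> \<theta> =
     (if (\<forall>i<K. 0 < \<theta> i) then (\<Prod>i<K. \<theta> i powr (\<alpha> i - 1)) / dir_beta K \<alpha> else 0)"

definition simplex_extend :: "nat \<Rightarrow> (nat \<Rightarrow> real) \<Rightarrow> (nat \<Rightarrow> real)" where
  "simplex_extend K x =
     restrict (\<lambda>i. if i < K - 1 then x i else 1 - (\<Sum>j<K - 1. x j)) {..<K}"

text \<open>Dir(alpha) as a measure on vectors indexed by {..<K}: the density (w.r.t. Lebesgue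
  measure on the first K-1 coordinates) pushed forward to the simplex.\<close>
definition dirichlet :: "nat \<Rightarrow> (nat \<Rightarrow> real) \<Rightarrow> (nat \<Rightarrow> real) measure" where
  "dirichlet K \<alpha> =
     distr (density (PiM {..<K - 1} (\<lambda>_. lborel))
                    (\<lambda>x. ennreal (dir_density K \<alpha> (simplex_extend K x))))
           (PiM {..<K} (\<lambda>_. lborel)) (simplex_extend K)"

text \<open>Rankings: bijections of {0..K-1}; higher value = more preferred.\<close>
definition rankings :: "nat \<Rightarrow> (nat \<Rightarrow> nat) set" where
  "rankings K = {\<pi>. bij_betw \<pi> {..<K} {..<K}}"

definition kendall_tau :: "nat \<Rightarrow> (nat \<Rightarrow> nat) \<Rightarrow> (nat \<Rightarrow> real) \<Rightarrow> real" where
  "kendall_tau K \<pi> \<theta> = 2 / (real K * (real K - 1)) *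
     (\<Sum>i<K. \<Sum>j<K. if i \<noteq> j \<and> \<pi> i > \<pi> j \<and> \<theta> i > \<theta> j then 1 else 0)"

definition expected_tau :: "nat \<Rightarrow> (nat \<Rightarrow> real) \<Rightarrow> (nat \<Rightarrow> nat) \<Rightarrow> real" where
  "expected_tau K \<alpha> \<pi> = (\<integral>\<theta>. kendall_tau K \<pi> \<theta> \<partial>dirichlet K \<alpha>)"

definition Pi_alpha :: "nat \<Rightarrow> (nat \<Rightarrow> real) \<Rightarrow> (nat \<Rightarrow> nat) set" where
  "Pi_alpha K \<alpha> = {\<pi> \<in> rankings K. \<forall>i<K. \<forall>j<K. \<pi> i > \<pi> j \<longrightarrow> \<alpha> i \<ge> \<alpha> j}"

end

theory Submission
  imports Defs
begin

text \<open>By linearity of expectation, the expected Kendall agreement of a ranking \<pi> is a positive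
  multiple of the sum, over the pairs that \<pi> ranks i above j, of the probability that
  \<theta> j < \<theta> i. Exchanging the coordinates i and j preserves Lebesgue measure on the simplex
  and multiplies the Dirichlet density by (\<theta> j / \<theta> i) powr (\<alpha> i - \<alpha> j). Hence
  P(\<theta> j < \<theta> i) \<ge> P(\<theta> i < \<theta> j) whenever \<alpha> i \<ge> \<alpha> j, strictly if \<alpha> i > \<alpha> j, so every pair
  contributes at most the larger of its two probabilities, and the maximum is attained exactly by
  the rankings that order every pair in accordance with \<alpha>.\<close>

section \<open>Pairwise scores of rankings\<close>

definition pair_score :: "nat \<Rightarrow> (nat \<Rightarrow> nat \<Rightarrow> real) \<Rightarrow> (nat \<Rightarrow> nat) \<Rightarrow> real" where
  "pair_score K q \<pi> = (\<Sum>i<K. \<Sum>j<K. if i \<noteq> j \<and> \<pi> j < \<pi> i then q i j else 0)"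

definition max_pair_score :: "nat \<Rightarrow> (nat \<Rightarrow> nat \<Rightarrow> real) \<Rightarrow> real" where
  "max_pair_score K q = (\<Sum>i<K. \<Sum>j<i. max (q i j) (q j i))"

lemma sum_lessThan_if_less:
  fixes f :: "nat \<Rightarrow> 'a::comm_monoid_add"
  assumes "i \<le> K"
  shows "(\<Sum>j<K. if j < i then f j else 0) = (\<Sum>j<i. f j)"
proof -
  have "{j \<in> {..<K}. j < i} = {..<i}" using assms by auto
  then show ?thesis by (simp flip: sum.inter_filter)
qed

lemma pair_score_lower_pairs:
  assumes "inj_on \<pi> {..<K}"
  shows "pair_score K q \<pi> = (\<Sum>i<K. \<Sum>j<i. if \<pi> j < \<pi> i then q i j else q j i)"
proof -
  have "pair_score K q \<pi> = (\<Sum>i<K. \<Sum>j<K. if j < i \<and> \<pi> j < \<pi> i then q i j else 0)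
      + (\<Sum>i<K. \<Sum>j<K. if i < j \<and> \<pi> j < \<pi> i then q i j else 0)"
    unfolding pair_score_def sum.distrib[symmetric] by (intro sum.cong refl) auto
  also have "(\<Sum>i<K. \<Sum>j<K. if i < j \<and> \<pi> j < \<pi> i then q i j else 0) =
             (\<Sum>i<K. \<Sum>j<K. if j < i \<and> \<pi> i < \<pi> j then q j i else 0)"
    by (rule sum.swap)
  also have "(\<Sum>i<K. \<Sum>j<K. if j < i \<and> \<pi> j < \<pi> i then q i j else 0) + \<dots> =
      (\<Sum>i<K. \<Sum>j<K. if j < i then (if \<pi> j < \<pi> i then q i j else q j i) else 0)"
    unfolding sum.distrib[symmetric]
  proof (intro sum.cong refl)
    fix i j assume "i \<in> {..<K}" "j \<in> {..<K}"
    then have "j < i \<Longrightarrow> \<pi> j \<noteq> \<pi> i" using assms by (metis inj_on_eq_iff less_irrefl)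
    then show "(if j < i \<and> \<pi> j < \<pi> i then q i j else 0) + (if j < i \<and> \<pi> i < \<pi> j then q j i else 0) =
        (if j < i then (if \<pi> j < \<pi> i then q i j else q j i) else 0)"
      by auto
  qed
  finally show ?thesis by (simp add: sum_lessThan_if_less)
qed

lemma pair_score_le_max:
  assumes "inj_on \<pi> {..<K}"
  shows "pair_score K q \<pi> \<le> max_pair_score K q"
  unfolding pair_score_lower_pairs[OF assms] max_pair_score_def by (intro sum_mono) auto

lemma pair_score_eq_max:
  assumes "\<pi> \<in> Pi_alpha K \<alpha>"
    and "\<And>i j. i < K \<Longrightarrow> j < K \<Longrightarrow> \<alpha> j \<le> \<alpha> i \<Longrightarrow> q j i \<le> q i j"
  shows "pair_score K q \<pi> = max_pair_score K q"
proof -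
  have inj: "inj_on \<pi> {..<K}" using assms(1) by (simp add: Pi_alpha_def rankings_def bij_betw_def)
  have "(if \<pi> j < \<pi> i then q i j else q j i) = max (q i j) (q j i)" if "i < K" "j < i" for i j
  proof -
    have "\<pi> j \<noteq> \<pi> i" using inj that by (metis inj_on_eq_iff lessThan_iff less_irrefl order.strict_trans)
    then consider "\<pi> j < \<pi> i" | "\<pi> i < \<pi> j" by linarith
    then show ?thesis
    proof cases
      case 1
      then have "q j i \<le> q i j" using assms that unfolding Pi_alpha_def by simp
      then show ?thesis using 1 by simp
    next
      case 2
      then have "q i j \<le> q j i" using assms that unfolding Pi_alpha_def by simp
      then show ?thesis using 2 by simp
    qed
  qed
  then show ?thesis unfolding pair_score_lower_pairs[OF inj] max_pair_score_def by simp
qed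

lemma pair_score_less_max:
  assumes "\<pi> \<in> rankings K" "\<pi> \<notin> Pi_alpha K \<alpha>"
    and "\<And>i j. i < K \<Longrightarrow> j < K \<Longrightarrow> \<alpha> j < \<alpha> i \<Longrightarrow> q j i < q i j"
  shows "pair_score K q \<pi> < max_pair_score K q"
proof -
  have inj: "inj_on \<pi> {..<K}" using assms(1) by (simp add: rankings_def bij_betw_def)
  obtain a b where ab: "a < K" "b < K" "\<pi> b < \<pi> a" "\<alpha> a < \<alpha> b"
    using assms(1,2) unfolding Pi_alpha_def by (auto simp: not_le)
  have "q a b < q b a" using assms(3) ab by blast
  then obtain i j where ij: "i < K" "j < i" "(if \<pi> j < \<pi> i then q i j else q j i) < max (q i j) (q j i)"
    using ab by (cases a b rule: linorder_cases) auto
  have "(\<Sum>j<i. if \<pi> j < \<pi> i then q i j else q j i) < (\<Sum>j<i. max (q i j) (q j i))"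
    using ij by (intro sum_strict_mono_ex1 bexI[of _ j]) auto
  then have "(\<Sum>i<K. \<Sum>j<i. if \<pi> j < \<pi> i then q i j else q j i) < (\<Sum>i<K. \<Sum>j<i. max (q i j) (q j i))"
    using ij by (intro sum_strict_mono_ex1) (auto intro!: sum_mono)
  then show ?thesis unfolding pair_score_lower_pairs[OF inj] max_pair_score_def .
qed

lemma Pi_alpha_nonempty: "Pi_alpha K \<alpha> \<noteq> {}"
proof -
  define before where "before k i \<longleftrightarrow> \<alpha> k < \<alpha> i \<or> (\<alpha> k = \<alpha> i \<and> k < i)" for k i
  define \<sigma> where "\<sigma> i = card {k \<in> {..<K}. before k i}" for i
  have total: "before i j \<or> before j i" if "i \<noteq> j" for i j using that unfolding before_def by auto
  have mono: "\<sigma> j < \<sigma> i" if "before j i" "j < K" for i j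
  proof -
    have "{k \<in> {..<K}. before k j} \<subset> {k \<in> {..<K}. before k i}"
      using that unfolding before_def by auto
    then show ?thesis unfolding \<sigma>_def by (intro psubset_card_mono) auto
  qed
  have range: "\<sigma> i < K" if "i < K" for i
  proof -
    have "{k \<in> {..<K}. before k i} \<subset> {..<K}" using that unfolding before_def by auto
    then show ?thesis unfolding \<sigma>_def by (metis card_lessThan finite_lessThan psubset_card_mono)
  qed
  have inj: "inj_on \<sigma> {..<K}"
  proof (rule inj_onI, rule ccontr)
    fix a b assume "a \<in> {..<K}" "b \<in> {..<K}" "\<sigma> a = \<sigma> b" "a \<noteq> b"
    then show False using total[of a b] mono[of a b] mono[of b a] by auto
  qed
  have "\<sigma> ` {..<K} = {..<K}"
    by (rule endo_inj_surj) (use range inj in auto)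
  then have "\<sigma> \<in> rankings K" unfolding rankings_def bij_betw_def using inj by simp
  moreover have "\<alpha> j \<le> \<alpha> i" if "i < K" "j < K" "\<sigma> j < \<sigma> i" for i j
  proof -
    have "\<not> before i j" using mono[of i j] that by auto
    moreover have "i \<noteq> j" using that by auto
    ultimately have "before j i" using total by blast
    then show ?thesis unfolding before_def by auto
  qed
  ultimately show ?thesis unfolding Pi_alpha_def by blast
qed

lemma is_arg_max_pair_score_iff:
  assumes "\<And>i j. i < K \<Longrightarrow> j < K \<Longrightarrow> \<alpha> j \<le> \<alpha> i \<Longrightarrow> q j i \<le> q i j"
    and "\<And>i j. i < K \<Longrightarrow> j < K \<Longrightarrow> \<alpha> j < \<alpha> i \<Longrightarrow> q j i < q i j"
  shows "is_arg_max (pair_score K q) (\<lambda>\<pi>. \<pi> \<in> rankings K) \<pi> \<longleftrightarrow> \<pi> \<in> Pi_alpha K \<alpha>"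
proof -
  have inj: "inj_on \<sigma> {..<K}" if "\<sigma> \<in> rankings K" for \<sigma>
    using that by (simp add: rankings_def bij_betw_def)
  obtain \<sigma> where \<sigma>: "\<sigma> \<in> Pi_alpha K \<alpha>" using Pi_alpha_nonempty by blast
  then have max_attained: "pair_score K q \<sigma> = max_pair_score K q" and "\<sigma> \<in> rankings K"
    using pair_score_eq_max[OF _ assms(1)] by (auto simp: Pi_alpha_def)
  show ?thesis
  proof
    assume "is_arg_max (pair_score K q) (\<lambda>\<pi>. \<pi> \<in> rankings K) \<pi>"
    then have "\<pi> \<in> rankings K" and "pair_score K q \<sigma> \<le> pair_score K q \<pi>"
      using \<open>\<sigma> \<in> rankings K\<close> by (auto simp: is_arg_max_linorder)
    then show "\<pi> \<in> Pi_alpha K \<alpha>"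
      using pair_score_less_max[OF _ _ assms(2)] max_attained by fastforce
  next
    assume "\<pi> \<in> Pi_alpha K \<alpha>"
    then show "is_arg_max (pair_score K q) (\<lambda>\<pi>. \<pi> \<in> rankings K) \<pi>"
      using pair_score_le_max[OF inj] pair_score_eq_max[OF _ assms(1)]
      by (auto simp: is_arg_max_linorder Pi_alpha_def)
  qed
qed

section \<open>Exchangeability of Lebesgue measure on the simplex\<close>

abbreviation lborel_PiM :: "nat \<Rightarrow> (nat \<Rightarrow> real) measure" where
  "lborel_PiM n \<equiv> PiM {..<n} (\<lambda>_. lborel)"

lemma simplex_extend_measurable[measurable]:
  "simplex_extend K \<in> lborel_PiM (K - 1) \<rightarrow>\<^sub>M lborel_PiM K"
  unfolding simplex_extend_def
proof (rule measurable_restrict)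
  fix i
  show "(\<lambda>x. if i < K - 1 then x i else 1 - sum x {..<K - 1}) \<in> lborel_PiM (K - 1) \<rightarrow>\<^sub>M lborel"
    by (cases "i < K - 1") simp_all
qed

lemma simplex_extend_sum:
  assumes "K \<ge> 1"
  shows "(\<Sum>k<K. simplex_extend K x k) = 1"
proof -
  have "{..<K} = insert (K - 1) {..<K - 1}" using assms by auto
  then have "(\<Sum>k<K. simplex_extend K x k) = simplex_extend K x (K - 1) + (\<Sum>k<K - 1. simplex_extend K x k)"
    by simp
  also have "(\<Sum>k<K - 1. simplex_extend K x k) = (\<Sum>k<K - 1. x k)"
    by (rule sum.cong) (auto simp: simplex_extend_def)
  also have "simplex_extend K x (K - 1) = 1 - (\<Sum>k<K - 1. x k)"
    using assms by (simp add: simplex_extend_def)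
  finally show ?thesis by simp
qed

lemma comp_transpose_measurable:
  assumes "a < K" "b < K"
  shows "(\<lambda>\<theta>. \<theta> \<circ> Transposition.transpose a b) \<in> lborel_PiM K \<rightarrow>\<^sub>M lborel_PiM K"
proof (rule measurable_PiM_single')
  show "(\<lambda>\<theta>. \<theta> \<circ> Transposition.transpose a b) \<in> space (lborel_PiM K) \<rightarrow> (\<Pi>\<^sub>E i\<in>{..<K}. space lborel)"
    using assms by (auto simp: space_PiM PiE_def extensional_def Transposition.transpose_def)
next
  fix i assume "i \<in> {..<K}"
  then have "Transposition.transpose a b i \<in> {..<K}" using assms by (auto simp: Transposition.transpose_def)
  then show "(\<lambda>\<theta>. (\<theta> \<circ> Transposition.transpose a b) i) \<in> lborel_PiM K \<rightarrow>\<^sub>M lborel" by simp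
qed

lemma simplex_extend_comp_transpose_last:
  assumes "a < K - 1"
  shows "simplex_extend K x \<circ> Transposition.transpose a (K - 1) =
    simplex_extend K (x(a := 1 - sum x {..<K - 1}))"
proof
  fix k
  have "sum (x(a := 1 - sum x {..<K - 1})) {..<K - 1} = 1 - x a"
    using assms by (simp add: sum.remove)
  then show "(simplex_extend K x \<circ> Transposition.transpose a (K - 1)) k =
      simplex_extend K (x(a := 1 - sum x {..<K - 1})) k"
    using assms by (cases "k = a \<or> k = K - 1") (auto simp: simplex_extend_def Transposition.transpose_def)
qed

text \<open>Along the free coordinate a, swapping it with the implicit last coordinate is the
  reflection y \<mapsto> s - y, where s is 1 minus the other free coordinates; Lebesgue measure
  is invariant under it.\<close>

lemma nn_integral_simplex_extend_transpose_last:
  assumes a: "a < K - 1" and "g \<in> borel_measurable (lborel_PiM K)"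
  shows "(\<integral>\<^sup>+x. g (simplex_extend K x) \<partial>lborel_PiM (K - 1)) =
    (\<integral>\<^sup>+x. g (simplex_extend K x \<circ> Transposition.transpose a (K - 1)) \<partial>lborel_PiM (K - 1))"
proof -
  interpret product_sigma_finite "\<lambda>_::nat. lborel :: real measure" by standard
  define I where "I = {..<K - 1} - {a}"
  have ins: "{..<K - 1} = insert a I" and "a \<notin> I" "finite I" using a by (auto simp: I_def)
  have t: "(\<lambda>\<theta>. \<theta> \<circ> Transposition.transpose a (K - 1)) \<in> lborel_PiM K \<rightarrow>\<^sub>M lborel_PiM K"
    using a by (intro comp_transpose_measurable) auto
  have flip: "simplex_extend K (x(a := y)) \<circ> Transposition.transpose a (K - 1) =
      simplex_extend K (x(a := (1 - sum x I) + (-1) * y))" for x y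
  proof -
    have sum_upd: "sum (x(a := y)) {..<K - 1} = y + sum x I"
      unfolding ins using \<open>a \<notin> I\<close> \<open>finite I\<close> by (auto simp: sum.insert_if intro!: sum.cong)
    show ?thesis
      unfolding simplex_extend_comp_transpose_last[OF a] fun_upd_upd sum_upd by (simp add: algebra_simps)
  qed
  have m1: "(\<lambda>x. g (simplex_extend K x)) \<in> borel_measurable (lborel_PiM (K - 1))"
    and m2: "(\<lambda>x. g (simplex_extend K x \<circ> Transposition.transpose a (K - 1)))
      \<in> borel_measurable (lborel_PiM (K - 1))"
    by (rule measurable_compose[OF simplex_extend_measurable assms(2)],
        rule measurable_compose[OF measurable_compose[OF simplex_extend_measurable t] assms(2)])
  have fiber: "(\<integral>\<^sup>+y. g (simplex_extend K (x(a := y))) \<partial>lborel) =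
      (\<integral>\<^sup>+y. g (simplex_extend K (x(a := y)) \<circ> Transposition.transpose a (K - 1)) \<partial>lborel)"
    if x: "x \<in> space (PiM I (\<lambda>_. lborel))" for x
  proof -
    have "(\<lambda>y. g (simplex_extend K (x(a := y)))) \<in> borel_measurable borel"
      using measurable_comp[OF measurable_component_update[OF x \<open>a \<notin> I\<close>] m1[unfolded ins]]
      by (simp add: comp_def)
    from nn_integral_real_affine[OF this, of "-1" "1 - sum x I"]
    show ?thesis unfolding flip by simp
  qed
  have "(\<integral>\<^sup>+x. g (simplex_extend K x) \<partial>lborel_PiM (K - 1)) =
      (\<integral>\<^sup>+x. \<integral>\<^sup>+y. g (simplex_extend K (x(a := y))) \<partial>lborel \<partial>PiM I (\<lambda>_. lborel))"
    unfolding ins by (rule product_nn_integral_insert[OF \<open>finite I\<close> \<open>a \<notin> I\<close> m1[unfolded ins]])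
  also have "\<dots> = (\<integral>\<^sup>+x. \<integral>\<^sup>+y. g (simplex_extend K (x(a := y)) \<circ> Transposition.transpose a (K - 1))
      \<partial>lborel \<partial>PiM I (\<lambda>_. lborel))"
    by (rule nn_integral_cong) (rule fiber)
  also have "\<dots> = (\<integral>\<^sup>+x. g (simplex_extend K x \<circ> Transposition.transpose a (K - 1)) \<partial>lborel_PiM (K - 1))"
    unfolding ins by (rule product_nn_integral_insert[symmetric, OF \<open>finite I\<close> \<open>a \<notin> I\<close> m2[unfolded ins]])
  finally show ?thesis .
qed

lemma nn_integral_simplex_extend_transpose:
  assumes a: "a < K" and b: "b < K" and "g \<in> borel_measurable (lborel_PiM K)"
  shows "(\<integral>\<^sup>+x. g (simplex_extend K x) \<partial>lborel_PiM (K - 1)) =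
    (\<integral>\<^sup>+x. g (simplex_extend K x \<circ> Transposition.transpose a b) \<partial>lborel_PiM (K - 1))"
proof -
  consider "a = b" | "a \<noteq> b" "a = K - 1" | "a \<noteq> b" "b = K - 1" | "a < K - 1" "b < K - 1" "a \<noteq> b"
    using a b by linarith
  then show ?thesis
  proof cases
    case 1 then show ?thesis by simp
  next
    case 2
    then have "b < K - 1" using b by linarith
    from nn_integral_simplex_extend_transpose_last[OF this assms(3)]
    show ?thesis using 2 by (simp only: transpose_commute[of "K - 1" b])
  next
    case 3
    then have "a < K - 1" using a by linarith
    from nn_integral_simplex_extend_transpose_last[OF this assms(3)]
    show ?thesis using 3 by (simp only:)
  next
    case 4
    let ?t = "\<lambda>c \<theta>. \<theta> \<circ> Transposition.transpose c (K - 1)"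
    have ta: "?t a \<in> lborel_PiM K \<rightarrow>\<^sub>M lborel_PiM K" and tb: "?t b \<in> lborel_PiM K \<rightarrow>\<^sub>M lborel_PiM K"
      using 4 by (auto intro!: comp_transpose_measurable)
    have ga: "(\<lambda>\<theta>. g (?t a \<theta>)) \<in> borel_measurable (lborel_PiM K)"
      by (rule measurable_compose[OF ta assms(3)])
    have gab: "(\<lambda>\<theta>. g (?t a (?t b \<theta>))) \<in> borel_measurable (lborel_PiM K)"
      by (rule measurable_compose[OF tb ga])
    have "(\<integral>\<^sup>+x. g (simplex_extend K x) \<partial>lborel_PiM (K - 1)) =
        (\<integral>\<^sup>+x. g (?t a (simplex_extend K x)) \<partial>lborel_PiM (K - 1))"
      by (rule nn_integral_simplex_extend_transpose_last[OF _ assms(3)]) (use 4 in simp)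
    also have "\<dots> = (\<integral>\<^sup>+x. g (?t a (?t b (simplex_extend K x))) \<partial>lborel_PiM (K - 1))"
      by (rule nn_integral_simplex_extend_transpose_last[OF _ ga]) (use 4 in simp)
    also have "\<dots> = (\<integral>\<^sup>+x. g (?t a (?t b (?t a (simplex_extend K x)))) \<partial>lborel_PiM (K - 1))"
      by (rule nn_integral_simplex_extend_transpose_last[OF _ gab]) (use 4 in simp)
    also have "\<dots> = (\<integral>\<^sup>+x. g (simplex_extend K x \<circ> Transposition.transpose a b) \<partial>lborel_PiM (K - 1))"
    proof -
      have "?t a (?t b (?t a \<theta>)) = \<theta> \<circ> Transposition.transpose a b" for \<theta> :: "nat \<Rightarrow> real"
      proof -
        have "Transposition.transpose a (K - 1) \<circ> Transposition.transpose b (K - 1) \<circ>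
            Transposition.transpose a (K - 1) = Transposition.transpose a b"
          using 4 transpose_comp_triple[of a b "K - 1"] by (simp add: transpose_commute[of b])
        then show ?thesis by (simp add: comp_assoc)
      qed
      then show ?thesis by simp
    qed
    finally show ?thesis .
  qed
qed

lemma simplex_extend_peaked:
  fixes x :: "nat \<Rightarrow> real"
  assumes K: "K \<ge> 2" and i: "i < K"
    and d0: "d > 0" and d8: "2 * d \<le> 1/4" and dK: "real (K - 1) * (2 * d) < 1/2"
    and xk: "\<And>k. k < K - 1 \<Longrightarrow> (if k = i then 1/2 else 0) + d < x k \<and> x k < (if k = i then 1/2 else 0) + d + d"
  shows "(\<forall>k<K. 0 < simplex_extend K x k) \<and> (\<forall>j<K. j \<noteq> i \<longrightarrow> simplex_extend K x j < simplex_extend K x i)"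
proof -
  have ne: "{..<K - 1} \<noteq> {}" using K by (auto simp: lessThan_empty_iff)
  have "(\<Sum>k<K - 1. x k) < (\<Sum>k<K - 1. (if k = i then 1/2 else 0) + d + d)"
    by (rule sum_strict_mono) (use xk ne in auto)
  also have "(\<Sum>k<K - 1. (if k = i then 1/2 else 0) + d + d) =
      (\<Sum>k<K - 1. (if k = i then 1/2 else (0::real))) + real (K - 1) * (2 * d)"
    by (simp add: sum.distrib)
  also have "(\<Sum>k<K - 1. (if k = i then 1/2 else (0::real))) = (if i < K - 1 then 1/2 else 0)"
    by (simp add: sum.delta)
  finally have S: "(\<Sum>k<K - 1. x k) < (if i < K - 1 then 1/2 else 0) + real (K - 1) * (2 * d)" .
  have xpos: "x k > 0" if "k < K - 1" for k
  proof -
    have "(if k = i then 1/2 else 0) + d < x k" using xk[OF that] by blast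
    moreover have "(if k = i then 1/2 else 0) + d > (0::real)" using d0 by simp
    ultimately show ?thesis by linarith
  qed
  have Spos: "(\<Sum>k<K - 1. x k) \<ge> x k" if "k < K - 1" for k
  proof -
    have "(\<Sum>k<K - 1. x k) = x k + (\<Sum>k\<in>{..<K - 1} - {k}. x k)" using that by (simp add: sum.remove)
    moreover have "(\<Sum>k\<in>{..<K - 1} - {k}. x k) \<ge> 0" using xpos by (intro sum_nonneg) (simp add: less_imp_le)
    ultimately show ?thesis by simp
  qed
  have E1: "simplex_extend K x k = x k" if "k < K - 1" for k using that by (auto simp add: simplex_extend_def)
  have E2: "simplex_extend K x (K - 1) = 1 - (\<Sum>k<K - 1. x k)" using K by (simp add: simplex_extend_def)
  have pos: "0 < simplex_extend K x k" if "k < K" for k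
  proof (cases "k < K - 1")
    case True then show ?thesis using E1 xpos by simp
  next
    case False then have "k = K - 1" using that by auto
    moreover have "(\<Sum>k<K - 1. x k) < 1" using S dK by (auto split: if_splits)
    ultimately show ?thesis using E2 by simp
  qed
  have cmp: "simplex_extend K x j < simplex_extend K x i" if "j < K" "j \<noteq> i" for j
  proof (cases "i < K - 1")
    case True
    have xi: "x i > 1/2 + d" using xk[OF True] by simp
    show ?thesis
    proof (cases "j < K - 1")
      case True
      have "x j < 2 * d" using xk[OF True] \<open>j \<noteq> i\<close> by simp
      then show ?thesis using E1[OF True] E1[OF \<open>i < K - 1\<close>] xi d8 d0 by simp
    next
      case False then have "j = K - 1" using that by auto
      then show ?thesis using E1[OF True] E2 Spos[OF True] xi d0 by simp
    qed
  next
    case False then have ii: "i = K - 1" using i by auto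
    have jj: "j < K - 1" using that ii by auto
    have "x j < 2 * d" using xk[OF jj] \<open>j \<noteq> i\<close> by simp
    moreover have "(\<Sum>k<K - 1. x k) < 1/2" using S False dK by simp
    ultimately show ?thesis using E1[OF jj] E2 ii d8 by simp
  qed
  show ?thesis using pos cmp by auto
qed

lemma simplex_extend_peaked_box:
  assumes K: "K \<ge> 2" and i: "i < K"
  shows "\<exists>B \<in> sets (lborel_PiM (K - 1)). emeasure (lborel_PiM (K - 1)) B > 0 \<and>
     (\<forall>x\<in>B. (\<forall>k<K. 0 < simplex_extend K x k) \<and> (\<forall>j<K. j \<noteq> i \<longrightarrow> simplex_extend K x j < simplex_extend K x i))"
proof -
  interpret product_sigma_finite "\<lambda>_::nat. (lborel::real measure)" by standard
  define d :: real where "d = 1 / (4 * K)"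
  have d0: "d > 0" using K by (simp add: d_def)
  have d8: "2 * d \<le> 1/4" using K by (simp add: d_def field_simps)
  have dK: "real (K - 1) * (2 * d) < 1/2" using K by (simp add: d_def field_simps of_nat_diff)
  define lo where "lo k = (if k = i then 1/2 else 0) + d" for k
  define B where "B = PiE {..<K - 1} (\<lambda>k. {lo k<..<lo k + d})"
  have Bs: "B \<in> sets (lborel_PiM (K - 1))" unfolding B_def by (rule sets_PiM_I_finite) auto
  have "emeasure (lborel_PiM (K - 1)) B = (\<Prod>k<K - 1. emeasure lborel {lo k<..<lo k + d})"
    unfolding B_def by (rule emeasure_PiM) auto
  also have "\<dots> = (\<Prod>k<K - 1. ennreal d)" using d0 by simp
  also have "\<dots> = ennreal (d ^ (K - 1))"
    using d0 by (simp only: prod_constant card_lessThan ennreal_power[OF less_imp_le[OF d0]])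
  finally have eB: "emeasure (lborel_PiM (K - 1)) B = ennreal (d ^ (K - 1))" .
  have Bpos: "emeasure (lborel_PiM (K - 1)) B > 0"
    unfolding eB ennreal_less_zero_iff using d0 by (rule zero_less_power)
  have pts: "(\<forall>k<K. 0 < simplex_extend K x k) \<and> (\<forall>j<K. j \<noteq> i \<longrightarrow> simplex_extend K x j < simplex_extend K x i)"
    if x: "x \<in> B" for x
  proof (rule simplex_extend_peaked[OF K i d0 d8 dK])
    fix k assume k: "k < K - 1"
    have "x k \<in> {lo k<..<lo k + d}"
      using PiE_mem[of x "{..<K - 1}" "\<lambda>k. {lo k<..<lo k + d}" k] x k unfolding B_def by blast
    then show "(if k = i then 1/2 else 0) + d < x k \<and> x k < (if k = i then 1/2 else 0) + d + d"
      unfolding lo_def by simp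
  qed
  show ?thesis using Bs Bpos pts by blast
qed

section \<open>The Dirichlet density under a transposition\<close>

lemma dir_density_measurable[measurable]: "dir_density K \<alpha> \<in> borel_measurable (lborel_PiM K)"
  unfolding dir_density_def by measurable

lemma dir_beta_pos:
  assumes "K \<ge> 1" "\<forall>i<K. 0 < \<alpha> i"
  shows "0 < dir_beta K \<alpha>"
proof -
  have "0 < (\<Sum>i<K. \<alpha> i)" using assms by (intro sum_pos) (auto simp: lessThan_empty_iff)
  then show ?thesis
    unfolding dir_beta_def using assms by (intro divide_pos_pos prod_pos Gamma_real_pos) auto
qed

lemma dir_density_nonneg:
  assumes "K \<ge> 1" "\<forall>i<K. 0 < \<alpha> i"
  shows "0 \<le> dir_density K \<alpha> \<theta>"
  using dir_beta_pos[OF assms] unfolding dir_density_def by (auto intro!: prod_nonneg divide_nonneg_pos)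

lemma dir_density_pair_factor:
  assumes "i < K" "j < K" "i \<noteq> j" "\<forall>k<K. 0 < \<theta> k"
  shows "dir_density K \<alpha> \<theta> = \<theta> i powr (\<alpha> i - 1) * \<theta> j powr (\<alpha> j - 1) *
    (\<Prod>k\<in>{..<K} - {i, j}. \<theta> k powr (\<alpha> k - 1)) / dir_beta K \<alpha>"
proof -
  have split: "{..<K} = insert i (insert j ({..<K} - {i, j}))" using assms by auto
  have "(\<Prod>k<K. \<theta> k powr (\<alpha> k - 1)) = \<theta> i powr (\<alpha> i - 1) * (\<theta> j powr (\<alpha> j - 1) *
      (\<Prod>k\<in>{..<K} - {i, j}. \<theta> k powr (\<alpha> k - 1)))"
    by (subst (1) split) (simp add: assms(3))
  then show ?thesis using assms(4) unfolding dir_density_def by (simp add: mult.assoc)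
qed

lemma all_pos_comp_transpose_iff:
  assumes "i < K" "j < K"
  shows "(\<forall>k<K. 0 < (\<theta> \<circ> Transposition.transpose i j) k) \<longleftrightarrow> (\<forall>k<K. 0 < \<theta> k)"
proof -
  have "Transposition.transpose i j k < K" if "k < K" for k
    using assms that by (auto simp: Transposition.transpose_def)
  then show ?thesis by (metis comp_apply transpose_involutory)
qed

lemma dir_density_comp_transpose:
  assumes "i < K" "j < K" "i \<noteq> j" "\<forall>k<K. 0 < \<theta> k"
  shows "dir_density K \<alpha> (\<theta> \<circ> Transposition.transpose i j) = \<theta> j powr (\<alpha> i - 1) * \<theta> i powr (\<alpha> j - 1) *
    (\<Prod>k\<in>{..<K} - {i, j}. \<theta> k powr (\<alpha> k - 1)) / dir_beta K \<alpha>"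
proof -
  have "(\<Prod>k\<in>{..<K} - {i, j}. (\<theta> \<circ> Transposition.transpose i j) k powr (\<alpha> k - 1)) =
      (\<Prod>k\<in>{..<K} - {i, j}. \<theta> k powr (\<alpha> k - 1))"
    by (intro prod.cong) (auto simp: transpose_apply_other)
  moreover have "\<forall>k<K. 0 < (\<theta> \<circ> Transposition.transpose i j) k"
    using all_pos_comp_transpose_iff[OF assms(1,2)] assms(4) by blast
  ultimately show ?thesis
    using dir_density_pair_factor[OF assms(1-3), of "\<theta> \<circ> Transposition.transpose i j"] by simp
qed

lemma powr_mult_swap_le:
  fixes s t a b :: real
  assumes "0 < s" "s \<le> t" "b \<le> a"
  shows "s powr a * t powr b \<le> t powr a * s powr b"
proof -
  have "s powr a * t powr b = s powr (a - b) * (s powr b * t powr b)"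
    by (simp add: mult.assoc flip: powr_add)
  also have "\<dots> \<le> t powr (a - b) * (s powr b * t powr b)"
    using assms by (intro mult_right_mono powr_mono2) auto
  also have "\<dots> = t powr a * s powr b"
    by (simp add: mult_ac flip: powr_add)
  finally show ?thesis .
qed

lemma powr_mult_swap_less:
  fixes s t a b :: real
  assumes "0 < s" "s < t" "b < a"
  shows "s powr a * t powr b < t powr a * s powr b"
proof -
  have "s powr a * t powr b = s powr (a - b) * (s powr b * t powr b)"
    by (simp add: mult.assoc flip: powr_add)
  also have "\<dots> < t powr (a - b) * (s powr b * t powr b)"
    using assms by (intro mult_strict_right_mono powr_less_mono2) auto
  also have "\<dots> = t powr a * s powr b"
    by (simp add: mult_ac flip: powr_add)
  finally show ?thesis .
qed

lemma dir_density_comp_transpose_le: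
  assumes "K \<ge> 1" "\<forall>k<K. 0 < \<alpha> k" "i < K" "j < K" "\<alpha> j \<le> \<alpha> i" "\<theta> j \<le> \<theta> i"
  shows "dir_density K \<alpha> (\<theta> \<circ> Transposition.transpose i j) \<le> dir_density K \<alpha> \<theta>"
proof (cases "i \<noteq> j \<and> (\<forall>k<K. 0 < \<theta> k)")
  case True
  have "\<theta> j powr (\<alpha> i - 1) * \<theta> i powr (\<alpha> j - 1) \<le> \<theta> i powr (\<alpha> i - 1) * \<theta> j powr (\<alpha> j - 1)"
    using True assms by (intro powr_mult_swap_le) auto
  then show ?thesis
    unfolding dir_density_comp_transpose[OF assms(3,4) conjunct1[OF True] conjunct2[OF True]]
      dir_density_pair_factor[OF assms(3,4) conjunct1[OF True] conjunct2[OF True]]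
    using True dir_beta_pos[OF assms(1,2)]
    by (intro divide_right_mono mult_right_mono prod_nonneg) auto
next
  case False
  then show ?thesis
    using all_pos_comp_transpose_iff[OF assms(3,4)] dir_density_nonneg[OF assms(1,2)]
    unfolding dir_density_def by auto
qed

lemma dir_density_comp_transpose_less:
  assumes "K \<ge> 1" "\<forall>k<K. 0 < \<alpha> k" "i < K" "j < K" "\<alpha> j < \<alpha> i" "\<theta> j < \<theta> i" "\<forall>k<K. 0 < \<theta> k"
  shows "dir_density K \<alpha> (\<theta> \<circ> Transposition.transpose i j) < dir_density K \<alpha> \<theta>"
proof -
  have "i \<noteq> j" using assms(6) by auto
  have "\<theta> j powr (\<alpha> i - 1) * \<theta> i powr (\<alpha> j - 1) < \<theta> i powr (\<alpha> i - 1) * \<theta> j powr (\<alpha> j - 1)"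
    using assms by (intro powr_mult_swap_less) auto
  then show ?thesis
    unfolding dir_density_comp_transpose[OF assms(3,4) \<open>i \<noteq> j\<close> assms(7)]
      dir_density_pair_factor[OF assms(3,4) \<open>i \<noteq> j\<close> assms(7)]
    using assms dir_beta_pos[OF assms(1,2)]
    by (intro divide_strict_right_mono mult_strict_right_mono prod_pos) auto
qed

section \<open>The Dirichlet measure is finite\<close>

lemma space_dirichlet[simp]: "space (dirichlet K \<alpha>) = space (lborel_PiM K)"
  by (simp add: dirichlet_def)

lemma sets_dirichlet[simp, measurable_cong]: "sets (dirichlet K \<alpha>) = sets (lborel_PiM K)"
  by (simp add: dirichlet_def)

lemma nn_integral_dirichlet:
  assumes "f \<in> borel_measurable (lborel_PiM K)"
  shows "(\<integral>\<^sup>+\<theta>. f \<theta> \<partial>dirichlet K \<alpha>) =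
    (\<integral>\<^sup>+x. ennreal (dir_density K \<alpha> (simplex_extend K x)) * f (simplex_extend K x) \<partial>lborel_PiM (K - 1))"
proof -
  let ?d = "\<lambda>x. ennreal (dir_density K \<alpha> (simplex_extend K x))"
  have d: "?d \<in> borel_measurable (lborel_PiM (K - 1))"
    by (rule measurable_compose[OF measurable_compose[OF simplex_extend_measurable dir_density_measurable]
        measurable_ennreal])
  have "simplex_extend K \<in> density (lborel_PiM (K - 1)) ?d \<rightarrow>\<^sub>M lborel_PiM K"
    by (subst measurable_cong_sets[OF sets_density refl]) (rule simplex_extend_measurable)
  moreover have
    "f \<in> borel_measurable (distr (density (lborel_PiM (K - 1)) ?d) (lborel_PiM K) (simplex_extend K))"
    by (subst measurable_cong_sets[OF sets_distr refl]) (rule assms)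
  ultimately have "(\<integral>\<^sup>+\<theta>. f \<theta> \<partial>dirichlet K \<alpha>) =
      (\<integral>\<^sup>+x. f (simplex_extend K x) \<partial>density (lborel_PiM (K - 1)) ?d)"
    unfolding dirichlet_def by (rule nn_integral_distr)
  also have "\<dots> = (\<integral>\<^sup>+x. ?d x * f (simplex_extend K x) \<partial>lborel_PiM (K - 1))"
    by (rule nn_integral_density[OF d measurable_compose[OF simplex_extend_measurable assms]])
  finally show ?thesis .
qed

definition beta_kernel :: "real \<Rightarrow> real \<Rightarrow> real" where
  "beta_kernel b t = (if t \<in> {0..1} then t powr (b - 1) else 0)"

lemma beta_kernel_measurable[measurable]: "beta_kernel b \<in> borel_measurable borel"
  unfolding beta_kernel_def by measurable

lemma beta_kernel_nonneg: "0 \<le> beta_kernel b t"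
  by (simp add: beta_kernel_def)

lemma nn_integral_beta_kernel:
  assumes "0 < b"
  shows "(\<integral>\<^sup>+t. ennreal (beta_kernel b t) \<partial>lborel) = ennreal (1 / b)"
proof -
  have "((\<lambda>t. t powr (b - 1)) has_integral (1 powr (b - 1 + 1) / (b - 1 + 1))) {0..1}"
    by (rule has_integral_powr_from_0) (use assms in auto)
  then have "(beta_kernel b has_integral (1 / b)) UNIV"
    unfolding beta_kernel_def has_integral_restrict_UNIV by simp
  then show ?thesis
    by (intro nn_integral_has_integral_lborel) (auto simp: beta_kernel_nonneg)
qed

lemma nn_integral_prod_beta_kernel_finite:
  assumes "\<And>k. k < n \<Longrightarrow> 0 < \<beta> k"
  shows "(\<integral>\<^sup>+x. ennreal (\<Prod>k<n. beta_kernel (\<beta> k) (x k)) \<partial>lborel_PiM n) < \<infinity>"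
proof -
  interpret product_sigma_finite "\<lambda>_::nat. lborel :: real measure" by standard
  have "(\<integral>\<^sup>+x. ennreal (\<Prod>k<n. beta_kernel (\<beta> k) (x k)) \<partial>lborel_PiM n) =
      (\<integral>\<^sup>+x. (\<Prod>k<n. ennreal (beta_kernel (\<beta> k) (x k))) \<partial>lborel_PiM n)"
    by (simp add: prod_ennreal beta_kernel_nonneg)
  also have "\<dots> = (\<Prod>k<n. \<integral>\<^sup>+t. ennreal (beta_kernel (\<beta> k) t) \<partial>lborel)"
    by (rule product_nn_integral_prod) auto
  also have "\<dots> = (\<Prod>k<n. ennreal (1 / \<beta> k))"
    using assms by (intro prod.cong) (simp_all add: nn_integral_beta_kernel)
  finally show ?thesis by (simp add: ennreal_prod_eq_top less_top[symmetric])
qed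

lemma powr_le_if_inverse_le:
  fixes c t e :: real
  assumes "1 \<le> c" "1 / c \<le> t" "-1 < e" "e \<le> 0"
  shows "t powr e \<le> c"
proof -
  have "t powr e \<le> (1 / c) powr e" using assms by (intro powr_mono2') auto
  also have "\<dots> = c powr (- e)" using assms by (simp add: powr_divide powr_minus_divide)
  also have "\<dots> \<le> c powr 1" using assms by (intro powr_mono) auto
  finally show ?thesis using assms by simp
qed

text \<open>The density is unbounded when some \<alpha> k < 1. On the simplex some coordinate m is at
  least 1/K, so its factor is at most K, and every other factor is dominated by a Beta kernel.\<close>

lemma dir_density_le_sum_beta_kernels:
  assumes "K \<ge> 1" "\<forall>k<K. 0 < \<alpha> k" "(\<Sum>k<K. \<theta> k) = 1"
  shows "dir_density K \<alpha> \<theta> \<le>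
    real K / dir_beta K \<alpha> * (\<Sum>m<K. \<Prod>k\<in>{..<K} - {m}. beta_kernel (min (\<alpha> k) 1) (\<theta> k))"
    (is "_ \<le> real K / _ * (\<Sum>m<K. ?G m)")
proof (cases "\<forall>k<K. 0 < \<theta> k")
  case False
  have "0 \<le> real K / dir_beta K \<alpha> * (\<Sum>m<K. ?G m)"
    using dir_beta_pos[OF assms(1,2)]
    by (intro mult_nonneg_nonneg divide_nonneg_pos sum_nonneg prod_nonneg beta_kernel_nonneg) auto
  then show ?thesis unfolding dir_density_def by (simp only: if_not_P[OF False])
next
  case pos: True
  define \<beta> where "\<beta> k = min (\<alpha> k) 1" for k
  have le1: "\<theta> k \<le> 1" if "k < K" for k
    using member_le_sum[of k "{..<K}" \<theta>] pos that assms(3) by (simp add: less_imp_le)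
  have "\<exists>m<K. 1 / real K \<le> \<theta> m"
  proof (rule ccontr)
    assume "\<not> ?thesis"
    then have "(\<Sum>k<K. \<theta> k) < (\<Sum>k<K. 1 / real K)"
      using assms(1) by (intro sum_strict_mono) (auto simp: lessThan_empty_iff not_le)
    then show False using assms by simp
  qed
  then obtain m where m: "m < K" "1 / real K \<le> \<theta> m" by blast
  have "(\<Prod>k<K. \<theta> k powr (\<alpha> k - 1)) \<le> (\<Prod>k<K. \<theta> k powr (\<beta> k - 1))"
    using pos le1 by (intro prod_mono) (auto simp: \<beta>_def intro!: powr_mono')
  also have "\<dots> = \<theta> m powr (\<beta> m - 1) * ?G m"
  proof -
    have "?G m = (\<Prod>k\<in>{..<K} - {m}. \<theta> k powr (\<beta> k - 1))"
      using pos le1 by (intro prod.cong) (auto simp: beta_kernel_def \<beta>_def less_imp_le)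
    then show ?thesis using m by (simp add: prod.remove)
  qed
  also have "\<dots> \<le> real K * ?G m"
    using assms m by (intro mult_right_mono powr_le_if_inverse_le prod_nonneg)
      (auto simp: \<beta>_def beta_kernel_nonneg)
  also have "\<dots> \<le> real K * (\<Sum>m<K. ?G m)"
    using m by (intro mult_left_mono member_le_sum prod_nonneg) (auto simp: beta_kernel_nonneg)
  finally show ?thesis
    using pos dir_beta_pos[OF assms(1,2)] unfolding dir_density_def by (simp add: divide_right_mono)
qed

lemma bij_betw_transpose_last:
  fixes m K :: nat
  assumes "m < K"
  shows "bij_betw (Transposition.transpose m (K - 1)) {..<K - 1} ({..<K} - {m})"
proof (rule bij_betw_imageI)
  show "inj_on (Transposition.transpose m (K - 1)) {..<K - 1}"
    by (meson inj_onI transpose_eq_imp_eq)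
  show "Transposition.transpose m (K - 1) ` {..<K - 1} = {..<K} - {m}"
  proof
    show "Transposition.transpose m (K - 1) ` {..<K - 1} \<subseteq> {..<K} - {m}"
      using assms by (auto simp: Transposition.transpose_def)
    show "{..<K} - {m} \<subseteq> Transposition.transpose m (K - 1) ` {..<K - 1}"
    proof
      fix k assume k: "k \<in> {..<K} - {m}"
      have "Transposition.transpose m (K - 1) k \<in> {..<K - 1}"
        using k assms by (auto simp: Transposition.transpose_def)
      then show "k \<in> Transposition.transpose m (K - 1) ` {..<K - 1}"
        by (metis image_eqI transpose_involutory)
    qed
  qed
qed

lemma nn_integral_simplex_extend_beta_kernels_finite:
  assumes "m < K" "\<forall>k<K. 0 < \<beta> k"
  shows "(\<integral>\<^sup>+x. ennreal (\<Prod>k\<in>{..<K} - {m}. beta_kernel (\<beta> k) (simplex_extend K x k))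
    \<partial>lborel_PiM (K - 1)) < \<infinity>"
proof -
  let ?t = "Transposition.transpose m (K - 1)"
  have meas: "(\<lambda>\<theta>. ennreal (\<Prod>k\<in>{..<K} - {m}. beta_kernel (\<beta> k) (\<theta> k))) \<in> borel_measurable (lborel_PiM K)"
    by measurable
  have "K - 1 < K" using assms(1) by simp
  have "(\<integral>\<^sup>+x. ennreal (\<Prod>k\<in>{..<K} - {m}. beta_kernel (\<beta> k) (simplex_extend K x k)) \<partial>lborel_PiM (K - 1)) =
      (\<integral>\<^sup>+x. ennreal (\<Prod>k\<in>{..<K} - {m}. beta_kernel (\<beta> k) (simplex_extend K x (?t k))) \<partial>lborel_PiM (K - 1))"
    using nn_integral_simplex_extend_transpose[OF assms(1) \<open>K - 1 < K\<close> meas] by (simp only: comp_apply)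
  also have "\<dots> = (\<integral>\<^sup>+x. ennreal (\<Prod>k<K - 1. beta_kernel (\<beta> (?t k)) (x k)) \<partial>lborel_PiM (K - 1))"
  proof (intro nn_integral_cong arg_cong[where f = ennreal])
    fix x :: "nat \<Rightarrow> real"
    have "(\<Prod>k\<in>{..<K} - {m}. beta_kernel (\<beta> k) (simplex_extend K x (?t k))) =
        (\<Prod>k<K - 1. beta_kernel (\<beta> (?t k)) (simplex_extend K x (?t (?t k))))"
      by (rule prod.reindex_bij_betw[OF bij_betw_transpose_last[OF assms(1)], symmetric])
    also have "\<dots> = (\<Prod>k<K - 1. beta_kernel (\<beta> (?t k)) (x k))"
      by (intro prod.cong) (auto simp: simplex_extend_def)
    finally show "(\<Prod>k\<in>{..<K} - {m}. beta_kernel (\<beta> k) (simplex_extend K x (?t k))) =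
        (\<Prod>k<K - 1. beta_kernel (\<beta> (?t k)) (x k))" .
  qed
  also have "\<dots> < \<infinity>"
    using assms by (intro nn_integral_prod_beta_kernel_finite) (auto simp: Transposition.transpose_def)
  finally show ?thesis .
qed

lemma finite_measure_dirichlet:
  assumes "K \<ge> 1" "\<forall>k<K. 0 < \<alpha> k"
  shows "finite_measure (dirichlet K \<alpha>)"
proof (rule finite_measureI)
  define \<beta> where "\<beta> k = min (\<alpha> k) 1" for k
  define G where "G m \<theta> = ennreal (\<Prod>k\<in>{..<K} - {m}. beta_kernel (\<beta> k) (\<theta> k))" for m \<theta>
  have [measurable]: "G m \<in> borel_measurable (lborel_PiM K)" for m
    unfolding G_def by measurable
  have "emeasure (dirichlet K \<alpha>) (space (dirichlet K \<alpha>)) =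
      (\<integral>\<^sup>+x. ennreal (dir_density K \<alpha> (simplex_extend K x)) \<partial>lborel_PiM (K - 1))"
    using nn_integral_dirichlet[of "\<lambda>_. 1" K \<alpha>] by simp
  also have "\<dots> \<le> (\<integral>\<^sup>+x. ennreal (real K / dir_beta K \<alpha>) * (\<Sum>m<K. G m (simplex_extend K x))
      \<partial>lborel_PiM (K - 1))"
  proof (intro nn_integral_mono)
    fix x
    let ?P = "\<lambda>m. \<Prod>k\<in>{..<K} - {m}. beta_kernel (\<beta> k) (simplex_extend K x k)"
    have "ennreal (real K / dir_beta K \<alpha>) * (\<Sum>m<K. G m (simplex_extend K x)) =
        ennreal (real K / dir_beta K \<alpha> * (\<Sum>m<K. ?P m))"
    proof -
      have "(\<Sum>m<K. G m (simplex_extend K x)) = ennreal (\<Sum>m<K. ?P m)"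
        by (simp add: G_def prod_nonneg beta_kernel_nonneg)
      then show ?thesis
        using dir_beta_pos[OF assms]
        by (simp add: ennreal_mult[symmetric] sum_nonneg prod_nonneg beta_kernel_nonneg)
    qed
    then show "ennreal (dir_density K \<alpha> (simplex_extend K x)) \<le>
        ennreal (real K / dir_beta K \<alpha>) * (\<Sum>m<K. G m (simplex_extend K x))"
      using dir_density_le_sum_beta_kernels[OF assms simplex_extend_sum[OF assms(1)]]
      by (simp add: \<beta>_def ennreal_leI)
  qed
  also have "\<dots> = ennreal (real K / dir_beta K \<alpha>) *
      (\<integral>\<^sup>+x. (\<Sum>m<K. G m (simplex_extend K x)) \<partial>lborel_PiM (K - 1))"
    by (rule nn_integral_cmult) measurable
  also have "\<dots> = ennreal (real K / dir_beta K \<alpha>) * (\<Sum>m<K. \<integral>\<^sup>+x. G m (simplex_extend K x) \<partial>lborel_PiM (K - 1))"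
    by (subst nn_integral_sum) measurable
  also have "\<dots> < \<infinity>"
    using nn_integral_simplex_extend_beta_kernels_finite[of _ K \<beta>] assms(2)
    by (simp add: G_def \<beta>_def ennreal_mult_less_top ennreal_sum_less_top ennreal_mult_eq_top_iff
        ennreal_sum_eq_top less_top[symmetric])
  finally show "emeasure (dirichlet K \<alpha>) (space (dirichlet K \<alpha>)) \<noteq> \<infinity>" by simp
qed

section \<open>Pairwise preference probabilities\<close>

lemma nn_integral_strict_mono_on_positive_set:
  assumes "f \<in> borel_measurable M" "g \<in> borel_measurable M" "integral\<^sup>N M f \<noteq> \<infinity>"
    and "\<And>x. f x \<le> g x"
    and "B \<in> sets M" "0 < emeasure M B" "\<And>x. x \<in> B \<Longrightarrow> f x < g x"
  shows "integral\<^sup>N M f < integral\<^sup>N M g"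
proof (rule nn_integral_less[OF assms(1-3)])
  show "AE x in M. f x \<le> g x" using assms(4) by simp
  show "\<not> (AE x in M. g x \<le> f x)"
  proof
    assume "AE x in M. g x \<le> f x"
    then have "AE x in M. x \<notin> B"
      using assms(7) by (auto elim!: eventually_mono simp: not_le[symmetric])
    then have "emeasure M {x \<in> space M. x \<in> B} = 0"
      by (rule emeasure_eq_0_AE)
    moreover have "{x \<in> space M. x \<in> B} = B"
      using sets.sets_into_space[OF assms(5)] by auto
    ultimately show False using assms(6) by simp
  qed
qed

definition pref_prob :: "nat \<Rightarrow> (nat \<Rightarrow> real) \<Rightarrow> nat \<Rightarrow> nat \<Rightarrow> real" where
  "pref_prob K \<alpha> i j = measure (dirichlet K \<alpha>) {\<theta> \<in> space (dirichlet K \<alpha>). \<theta> j < \<theta> i}"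

lemma emeasure_dirichlet_less:
  assumes "i < K" "j < K"
  shows "emeasure (dirichlet K \<alpha>) {\<theta> \<in> space (dirichlet K \<alpha>). \<theta> j < \<theta> i} =
    (\<integral>\<^sup>+x. ennreal (dir_density K \<alpha> (simplex_extend K x)) *
      indicator {x. simplex_extend K x j < simplex_extend K x i} x \<partial>lborel_PiM (K - 1))"
proof -
  let ?A = "{\<theta> \<in> space (lborel_PiM K). \<theta> j < \<theta> i}"
  have [measurable]: "(\<lambda>\<theta>. \<theta> i) \<in> borel_measurable (lborel_PiM K)"
      "(\<lambda>\<theta>. \<theta> j) \<in> borel_measurable (lborel_PiM K)"
    using assms by simp_all
  have [measurable]: "?A \<in> sets (lborel_PiM K)" by measurable
  have "emeasure (dirichlet K \<alpha>) ?A = (\<integral>\<^sup>+\<theta>. indicator ?A \<theta> \<partial>dirichlet K \<alpha>)"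
    by simp
  also have "\<dots> = (\<integral>\<^sup>+x. ennreal (dir_density K \<alpha> (simplex_extend K x)) *
      indicator ?A (simplex_extend K x) \<partial>lborel_PiM (K - 1))"
    by (rule nn_integral_dirichlet) measurable
  also have "\<dots> = (\<integral>\<^sup>+x. ennreal (dir_density K \<alpha> (simplex_extend K x)) *
      indicator {x. simplex_extend K x j < simplex_extend K x i} x \<partial>lborel_PiM (K - 1))"
    using measurable_space[OF simplex_extend_measurable]
    by (intro nn_integral_cong) (auto simp: indicator_def)
  finally show ?thesis by simp
qed

lemma emeasure_dirichlet_greater:
  assumes "i < K" "j < K"
  shows "emeasure (dirichlet K \<alpha>) {\<theta> \<in> space (dirichlet K \<alpha>). \<theta> i < \<theta> j} =
    (\<integral>\<^sup>+x. ennreal (dir_density K \<alpha> (simplex_extend K x \<circ> Transposition.transpose i j)) *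
      indicator {x. simplex_extend K x j < simplex_extend K x i} x \<partial>lborel_PiM (K - 1))"
proof -
  let ?g = "\<lambda>\<theta>. ennreal (dir_density K \<alpha> \<theta>) * (if \<theta> i < \<theta> j then 1 else 0)"
  have [measurable]: "(\<lambda>\<theta>. \<theta> i) \<in> borel_measurable (lborel_PiM K)"
      "(\<lambda>\<theta>. \<theta> j) \<in> borel_measurable (lborel_PiM K)"
    using assms by simp_all
  have "?g \<in> borel_measurable (lborel_PiM K)"
    by measurable
  from nn_integral_simplex_extend_transpose[OF assms this]
  show ?thesis
    unfolding emeasure_dirichlet_less[OF assms(2,1)] by (simp add: indicator_def of_bool_def)
qed

lemma pref_prob_le:
  assumes "K \<ge> 1" "\<forall>k<K. 0 < \<alpha> k" "i < K" "j < K" "\<alpha> j \<le> \<alpha> i"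
  shows "pref_prob K \<alpha> j i \<le> pref_prob K \<alpha> i j"
proof -
  interpret finite_measure "dirichlet K \<alpha>" by (rule finite_measure_dirichlet[OF assms(1,2)])
  have "emeasure (dirichlet K \<alpha>) {\<theta> \<in> space (dirichlet K \<alpha>). \<theta> i < \<theta> j} \<le>
      emeasure (dirichlet K \<alpha>) {\<theta> \<in> space (dirichlet K \<alpha>). \<theta> j < \<theta> i}"
    unfolding emeasure_dirichlet_greater[OF assms(3,4)] emeasure_dirichlet_less[OF assms(3,4)]
    using dir_density_comp_transpose_le[OF assms(1-5)]
    by (intro nn_integral_mono) (auto simp: indicator_def intro!: ennreal_leI)
  then show ?thesis unfolding pref_prob_def by (simp add: emeasure_eq_measure)
qed

lemma pref_prob_less:
  assumes "\<forall>k<K. 0 < \<alpha> k" "i < K" "j < K" "\<alpha> j < \<alpha> i"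
  shows "pref_prob K \<alpha> j i < pref_prob K \<alpha> i j"
proof -
  have "i \<noteq> j" using assms(4) by auto
  then have K: "K \<ge> 2" using assms(2,3) by linarith
  then have K1: "K \<ge> 1" by simp
  interpret finite_measure "dirichlet K \<alpha>" by (rule finite_measure_dirichlet[OF K1 assms(1)])
  let ?ij = "{x. simplex_extend K x j < simplex_extend K x i}"
  define f where
    "f x = ennreal (dir_density K \<alpha> (simplex_extend K x \<circ> Transposition.transpose i j)) * indicator ?ij x"
    for x
  define g where "g x = ennreal (dir_density K \<alpha> (simplex_extend K x)) * indicator ?ij x" for x
  have [measurable]: "(\<lambda>\<theta>. \<theta> i) \<in> borel_measurable (lborel_PiM K)"
      "(\<lambda>\<theta>. \<theta> j) \<in> borel_measurable (lborel_PiM K)"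
    and [measurable]: "(\<lambda>\<theta>. \<theta> \<circ> Transposition.transpose i j) \<in> lborel_PiM K \<rightarrow>\<^sub>M lborel_PiM K"
    using assms by (simp_all add: comp_transpose_measurable)
  have f_eq: "emeasure (dirichlet K \<alpha>) {\<theta> \<in> space (dirichlet K \<alpha>). \<theta> i < \<theta> j} =
      integral\<^sup>N (lborel_PiM (K - 1)) f"
    unfolding f_def by (rule emeasure_dirichlet_greater[OF assms(2,3)])
  have g_eq: "emeasure (dirichlet K \<alpha>) {\<theta> \<in> space (dirichlet K \<alpha>). \<theta> j < \<theta> i} =
      integral\<^sup>N (lborel_PiM (K - 1)) g"
    unfolding g_def by (rule emeasure_dirichlet_less[OF assms(2,3)])
  obtain B where B: "B \<in> sets (lborel_PiM (K - 1))" "0 < emeasure (lborel_PiM (K - 1)) B"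
    and peaked: "\<And>x. x \<in> B \<Longrightarrow> (\<forall>k<K. 0 < simplex_extend K x k) \<and>
      (\<forall>j<K. j \<noteq> i \<longrightarrow> simplex_extend K x j < simplex_extend K x i)"
    using simplex_extend_peaked_box[OF K assms(2)] by blast
  have "integral\<^sup>N (lborel_PiM (K - 1)) f < integral\<^sup>N (lborel_PiM (K - 1)) g"
  proof (rule nn_integral_strict_mono_on_positive_set[OF _ _ _ _ B])
    show "f \<in> borel_measurable (lborel_PiM (K - 1))" "g \<in> borel_measurable (lborel_PiM (K - 1))"
      unfolding f_def g_def by measurable
    show "integral\<^sup>N (lborel_PiM (K - 1)) f \<noteq> \<infinity>"
      unfolding f_eq[symmetric] by (simp add: emeasure_eq_measure)
    show "f x \<le> g x" for x
      using dir_density_comp_transpose_le[OF K1 assms(1-3) less_imp_le[OF assms(4)]]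
      by (auto simp: f_def g_def indicator_def intro!: ennreal_leI)
    show "f x < g x" if "x \<in> B" for x
    proof -
      have "simplex_extend K x j < simplex_extend K x i" using peaked[OF that] \<open>i \<noteq> j\<close> assms(3) by auto
      moreover have "0 \<le> dir_density K \<alpha> (simplex_extend K x \<circ> Transposition.transpose i j)"
        by (rule dir_density_nonneg[OF K1 assms(1)])
      ultimately show ?thesis
        using dir_density_comp_transpose_less[OF K1 assms(1-4)] peaked[OF that]
        by (simp add: f_def g_def ennreal_less_iff)
    qed
  qed
  then show ?thesis
    unfolding pref_prob_def f_eq[symmetric] g_eq[symmetric]
    by (simp add: emeasure_eq_measure ennreal_less_iff)
qed

lemma kendall_tau_eq_sum_indicator:
  "kendall_tau K \<pi> \<theta> = 2 / (real K * (real K - 1)) *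
    (\<Sum>i<K. \<Sum>j<K. if i \<noteq> j \<and> \<pi> j < \<pi> i then indicator {\<theta>. \<theta> j < \<theta> i} \<theta> else 0)"
  unfolding kendall_tau_def by (intro arg_cong2[where f = "(*)"] sum.cong refl) auto

lemma expected_tau_eq_pair_score:
  assumes "K \<ge> 1" "\<forall>k<K. 0 < \<alpha> k"
  shows "expected_tau K \<alpha> \<pi> = 2 / (real K * (real K - 1)) * pair_score K (pref_prob K \<alpha>) \<pi>"
proof -
  interpret finite_measure "dirichlet K \<alpha>" by (rule finite_measure_dirichlet[OF assms])
  define F where "F i j \<theta> = (if i \<noteq> j \<and> \<pi> j < \<pi> i then indicator {\<theta>. \<theta> j < \<theta> i} \<theta> else 0 :: real)"
    for i j and \<theta> :: "nat \<Rightarrow> real"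
  have integrable: "integrable (dirichlet K \<alpha>) (F i j)" and integral: "integral\<^sup>L (dirichlet K \<alpha>) (F i j) =
      (if i \<noteq> j \<and> \<pi> j < \<pi> i then pref_prob K \<alpha> i j else 0)"
    if "i < K" "j < K" for i j
  proof -
    have [measurable]: "(\<lambda>\<theta>. \<theta> i) \<in> borel_measurable (lborel_PiM K)"
      "(\<lambda>\<theta>. \<theta> j) \<in> borel_measurable (lborel_PiM K)"
      using that by simp_all
    have meas: "{\<theta> \<in> space (lborel_PiM K). \<theta> j < \<theta> i} \<in> sets (lborel_PiM K)"
      by measurable
    have set_eq: "{\<theta>. \<theta> j < \<theta> i} \<inter> space (dirichlet K \<alpha>) = {\<theta> \<in> space (dirichlet K \<alpha>). \<theta> j < \<theta> i}"
      by auto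
    have int_ind: "integrable (dirichlet K \<alpha>) (indicator {\<theta>. \<theta> j < \<theta> i} :: _ \<Rightarrow> real)"
      unfolding integrable_indicator_iff set_eq using meas by (simp add: emeasure_eq_measure)
    show "integrable (dirichlet K \<alpha>) (F i j)"
      unfolding F_def by (cases "i \<noteq> j \<and> \<pi> j < \<pi> i") (auto simp: int_ind)
    show "integral\<^sup>L (dirichlet K \<alpha>) (F i j) = (if i \<noteq> j \<and> \<pi> j < \<pi> i then pref_prob K \<alpha> i j else 0)"
      unfolding F_def pref_prob_def using set_eq by simp
  qed
  have "expected_tau K \<alpha> \<pi> = 2 / (real K * (real K - 1)) * (\<integral>\<theta>. (\<Sum>i<K. \<Sum>j<K. F i j \<theta>) \<partial>dirichlet K \<alpha>)"
    unfolding expected_tau_def kendall_tau_eq_sum_indicator F_def by (rule integral_mult_right_zero)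
  also have "(\<integral>\<theta>. (\<Sum>i<K. \<Sum>j<K. F i j \<theta>) \<partial>dirichlet K \<alpha>) = (\<Sum>i<K. \<integral>\<theta>. (\<Sum>j<K. F i j \<theta>) \<partial>dirichlet K \<alpha>)"
    by (rule Bochner_Integration.integral_sum) (auto intro: integrable)
  also have "\<dots> = (\<Sum>i<K. \<Sum>j<K. \<integral>\<theta>. F i j \<theta> \<partial>dirichlet K \<alpha>)"
    by (intro sum.cong refl Bochner_Integration.integral_sum) (auto intro: integrable)
  also have "\<dots> = pair_score K (pref_prob K \<alpha>) \<pi>"
    unfolding pair_score_def by (intro sum.cong refl) (simp add: integral)
  finally show ?thesis .
qed

theorem theorem1:
  fixes K :: nat and \<alpha> :: "nat \<Rightarrow> real"
  assumes "K \<ge> 2" and "\<forall>i<K. 0 < \<alpha> i"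
  shows "Pi_alpha K \<alpha> = {\<pi>. is_arg_max (expected_tau K \<alpha>) (\<lambda>\<pi>. \<pi> \<in> rankings K) \<pi>}"
proof -
  have K: "K \<ge> 1" using assms(1) by simp
  define c where "c = 2 / (real K * (real K - 1))"
  have "0 < c" using assms(1) by (simp add: c_def)
  have tau: "expected_tau K \<alpha> \<pi> = c * pair_score K (pref_prob K \<alpha>) \<pi>" for \<pi>
    unfolding c_def by (rule expected_tau_eq_pair_score[OF K assms(2)])
  have "is_arg_max (expected_tau K \<alpha>) (\<lambda>\<pi>. \<pi> \<in> rankings K) \<pi> \<longleftrightarrow>
      is_arg_max (pair_score K (pref_prob K \<alpha>)) (\<lambda>\<pi>. \<pi> \<in> rankings K) \<pi>" for \<pi>
    using \<open>0 < c\<close> unfolding is_arg_max_linorder tau by simp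
  moreover have "is_arg_max (pair_score K (pref_prob K \<alpha>)) (\<lambda>\<pi>. \<pi> \<in> rankings K) \<pi> \<longleftrightarrow> \<pi> \<in> Pi_alpha K \<alpha>"
    for \<pi>
    by (rule is_arg_max_pair_score_iff[where q = "pref_prob K \<alpha>"])
      (simp_all add: pref_prob_le[OF K assms(2)] pref_prob_less[OF assms(2)])
  ultimately show ?thesis by blast
qed

end
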